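(* Let $G$ be a finite simple connected graph and let $C$ be a circuit of the toric ideal $I_G$ (i.e. $C\in\mathcal{C}_{A_G}$). Then $\operatorname{index}(C)=1$; consequently the true degree of $C$ equals its degree: $\operatorname{true\,deg}(C)=\deg(C)$.
   Context: Let $G$ be a finite simple connected graph with vertices $v_1,\dots,v_n$ and edges $e_1,\dots,e_m$. To each edge $e=\{v_i,v_j\}$ associate $a_e=\mathbf{v}_i+\mathbf{v}_j\in\mathbb{Z}^n$, where $\mathbf{v}_k$ denotes the $k$-th standard basis vector. Let $A_G=\{a_e : e\in E(G)\}$. For a finite set $A=\{\mathbf a_1,\dots,\mathbf a_m\}\subseteq\mathbb{N}^n$, the toric ideal $I_A\subseteq\mathbb{K}[x_1,\dots,x_m]$ ($\mathbb{K}$ a field) is the ideal generated by all binomials $\mathbf{x}^{\mathbf u}-\mathbf{x}^{\mathbf v}$ with $\mathbf u,\mathbf v\in\mathbb{N}^m$ and $\sum u_i\mathbf a_i=\sum v_i\mathbf a_i$; $I_G:=I_{A_G}$ in the polynomial ring $\mathbb{K}[e_1,\dots,e_m]$. A circuit of $I_A$ is an irreducible binomial $\mathbf{x}^{\mathbf u}-\mathbf{x}^{\mathbf v}\in I_A$ whose support (set of variables appearing) is minimal with respect to inclusion among nonzero binomials of $I_A$; $\mathcal{C}_A$ denotes the set of circuits. The support $\operatorname{supp}(C)$ of a circuit is regarded as the subset $\{\mathbf a_i : x_i \text{ appears in } C\}\subseteq A$. The index of $C$ is the (finite) index $\operatorname{index}(C)=[\,\mathbb{R}\operatorname{supp}(C)\cap\mathbb{Z}A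 : \mathbb{Z}\operatorname{supp}(C)\,]$, where $\mathbb{Z}A$ is the lattice generated by $A$. The degree of a binomial $\mathbf{x}^{\mathbf u}-\mathbf{x}^{\mathbf v}$ is the usual total degree (for $I_G$ all such binomials are homogeneous, so $\deg \mathbf{x}^{\mathbf u}=\deg\mathbf{x}^{\mathbf v}$). The true degree of a circuit $C$ is $\operatorname{true\,deg}(C)=\deg(C)\cdot\operatorname{index}(C)$. *)

theory Defs
  imports Complex_Main "HOL-Library.Poly_Mapping" "HOL-Computational_Algebra.Factorial_Ring"
begin

text \<open>A finite simple connected graph: vertices = the finite type 'v,
  edges = the finite type 'e, with endpoint map ends :: 'e => 'v set,
  each edge a 2-element set, distinct edges have distinct endpoint sets.\<close>

definition simple_connected_graph :: "('e \<Rightarrow> 'v set) \<Rightarrow> bool" where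
  "simple_connected_graph ends \<longleftrightarrow>
     finite (UNIV :: 'v set) \<and> finite (UNIV :: 'e set) \<and>
     inj ends \<and> (\<forall>e. card (ends e) = 2) \<and>
     (\<forall>x y. (\<lambda>a b. \<exists>e. ends e = {a, b})\<^sup>*\<^sup>* x y)"

definition edge_vec :: "('e \<Rightarrow> 'v set) \<Rightarrow> 'e \<Rightarrow> ('v \<Rightarrow> int)" where
  "edge_vec ends e = (\<lambda>i. if i \<in> ends e then 1 else 0)"

definition A_G :: "('e \<Rightarrow> 'v set) \<Rightarrow> ('v \<Rightarrow> int) set" where
  "A_G ends = range (edge_vec ends)"

text \<open>Polynomial ring K[e_1..e_m]: ('e =>0 nat) =>0 'k; monomial x^u.\<close>
definition monom_x :: "('e \<Rightarrow>\<^sub>0 nat) \<Rightarrow> (('e \<Rightarrow>\<^sub>0 nat) \<Rightarrow>\<^sub>0 'k::field)" where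
  "monom_x u = Poly_Mapping.single u 1"

definition binom_x :: "('e \<Rightarrow>\<^sub>0 nat) \<Rightarrow> ('e \<Rightarrow>\<^sub>0 nat) \<Rightarrow> (('e \<Rightarrow>\<^sub>0 nat) \<Rightarrow>\<^sub>0 'k::field)" where
  "binom_x u v = monom_x u - monom_x v"

definition weight :: "('e \<Rightarrow> ('v \<Rightarrow> int)) \<Rightarrow> ('e \<Rightarrow>\<^sub>0 nat) \<Rightarrow> ('v \<Rightarrow> int)" where
  "weight a u = (\<lambda>i. \<Sum>e\<in>Poly_Mapping.keys u. int (Poly_Mapping.lookup u e) * a e i)"

inductive_set toric_ideal :: "('e \<Rightarrow> ('v \<Rightarrow> int)) \<Rightarrow> (('e \<Rightarrow>\<^sub>0 nat) \<Rightarrow>\<^sub>0 'k::field) set"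
  for a where
  gen: "weight a u = weight a v \<Longrightarrow> binom_x u v \<in> toric_ideal a"
| zero: "0 \<in> toric_ideal a"
| add: "p \<in> toric_ideal a \<Longrightarrow> q \<in> toric_ideal a \<Longrightarrow> p + q \<in> toric_ideal a"
| mult: "p \<in> toric_ideal a \<Longrightarrow> r * p \<in> toric_ideal a"

definition toric_ideal_G :: "('e \<Rightarrow> 'v set) \<Rightarrow> (('e \<Rightarrow>\<^sub>0 nat) \<Rightarrow>\<^sub>0 'k::field) set" where
  "toric_ideal_G ends = toric_ideal (edge_vec ends)"

definition vars :: "(('e \<Rightarrow>\<^sub>0 nat) \<Rightarrow>\<^sub>0 'k::zero) \<Rightarrow> 'e set" where
  "vars p = \<Union> (Poly_Mapping.keys ` Poly_Mapping.keys p)"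

definition is_binomial :: "(('e \<Rightarrow>\<^sub>0 nat) \<Rightarrow>\<^sub>0 'k::field) \<Rightarrow> bool" where
  "is_binomial p \<longleftrightarrow> (\<exists>u v. p = binom_x u v)"

definition circuits :: "('e \<Rightarrow> ('v \<Rightarrow> int)) \<Rightarrow> (('e \<Rightarrow>\<^sub>0 nat) \<Rightarrow>\<^sub>0 'k::field) set" where
  "circuits a = {C. is_binomial C \<and> irreducible C \<and> C \<in> toric_ideal a \<and>
      (\<forall>B :: (('e \<Rightarrow>\<^sub>0 nat) \<Rightarrow>\<^sub>0 'k). is_binomial B \<and> B \<noteq> 0 \<and> B \<in> toric_ideal a \<and> vars B \<subseteq> vars C \<longrightarrow> vars B = vars C)}"

definition supp_vecs :: "('e \<Rightarrow> ('v \<Rightarrow> int)) \<Rightarrow> (('e \<Rightarrow>\<^sub>0 nat) \<Rightarrow>\<^sub>0 'k::zero) \<Rightarrow> ('v \<Rightarrow> int) set" where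
  "supp_vecs a C = a ` vars C"

definition int_span :: "('v \<Rightarrow> int) set \<Rightarrow> ('v \<Rightarrow> int) set" where
  "int_span S = {x. \<exists>c :: ('v \<Rightarrow> int) \<Rightarrow> int. x = (\<lambda>i. \<Sum>s\<in>S. c s * s i)}"

definition real_span_int :: "('v \<Rightarrow> int) set \<Rightarrow> ('v \<Rightarrow> int) set" where
  "real_span_int S = {x. \<exists>c :: ('v \<Rightarrow> int) \<Rightarrow> real. \<forall>i. real_of_int (x i) = (\<Sum>s\<in>S. c s * real_of_int (s i))}"

definition lattice_index :: "('v \<Rightarrow> int) set \<Rightarrow> ('v \<Rightarrow> int) set \<Rightarrow> nat" where
  "lattice_index L1 L2 = card ((\<lambda>x. (\<lambda>y. (\<lambda>i. x i + y i)) ` L2) ` L1)"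

definition circuit_index :: "('e \<Rightarrow> ('v \<Rightarrow> int)) \<Rightarrow> (('e \<Rightarrow>\<^sub>0 nat) \<Rightarrow>\<^sub>0 'k::zero) \<Rightarrow> nat" where
  "circuit_index a C = lattice_index
      (real_span_int (supp_vecs a C) \<inter> int_span (range a))
      (int_span (supp_vecs a C))"

definition total_degree :: "(('e \<Rightarrow>\<^sub>0 nat) \<Rightarrow>\<^sub>0 'k::zero) \<Rightarrow> nat" where
  "total_degree p = Max (insert 0 ((\<lambda>u. \<Sum>e\<in>Poly_Mapping.keys u. Poly_Mapping.lookup u e) ` Poly_Mapping.keys p))"

definition true_degree :: "('e \<Rightarrow> ('v \<Rightarrow> int)) \<Rightarrow> (('e \<Rightarrow>\<^sub>0 nat) \<Rightarrow>\<^sub>0 'k::zero) \<Rightarrow> nat" where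
  "true_degree a C = total_degree C * circuit_index a C"

end

theory Submission
  imports Defs
begin

(*
  Let C = x^u - x^v be a circuit of I_G with support V = vars C (a set of edges).
  (1) Grading: summing the coefficients over the monomials of a fixed A-degree kills
      the toric ideal, so sum u_i a_i = sum v_i a_i.
  (2) Connectivity: the edges of V form a connected subgraph; otherwise restricting
      u and v to one component would give a binomial of I_G with smaller support.
  (3) Saturation: for a connected edge set E, an integer vector of Z A_G in the real
      span of {a_e | e in E} lies in Z{a_e | e in E}.  Walks from a root r reduce
      every vector modulo Z{a_e} to a multiple k e_r.  An odd closed walk gives
      2 e_r in Z{a_e} and parity of coordinate sums makes k even; without one, the
      bipartite sign functional vanishes on the real span and is 1 at e_r, so k = 0.
  Hence R supp(C) cap Z A_G = Z supp(C), the index is 1 and true degree = degree.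
*)

section \<open>The A-grading of the polynomial ring\<close>

lemma weight_superset:
  assumes "finite F" "Poly_Mapping.keys u \<subseteq> F"
  shows "weight a u i = (\<Sum>e\<in>F. int (Poly_Mapping.lookup u e) * a e i)"
  unfolding weight_def
  by (rule sum.mono_neutral_left) (auto simp: assms in_keys_iff)

lemma weight_add: "weight a (l + m) = (\<lambda>i. weight a l i + weight a m i)"
proof
  fix i
  let ?F = "Poly_Mapping.keys l \<union> Poly_Mapping.keys m"
  have fin: "finite ?F" by simp
  have "weight a (l + m) i = (\<Sum>e\<in>?F. int (Poly_Mapping.lookup (l + m) e) * a e i)"
    by (rule weight_superset[OF fin]) (meson Poly_Mapping.keys_add)
  also have "\<dots> = (\<Sum>e\<in>?F. int (Poly_Mapping.lookup l e) * a e i)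
                 + (\<Sum>e\<in>?F. int (Poly_Mapping.lookup m e) * a e i)"
    by (simp add: lookup_add sum.distrib algebra_simps)
  also have "\<dots> = weight a l i + weight a m i"
    by (simp add: weight_superset[OF fin])
  finally show "weight a (l + m) i = weight a l i + weight a m i" .
qed

definition degree_coeff_sum ::
    "('e \<Rightarrow> ('v \<Rightarrow> int)) \<Rightarrow> (('e \<Rightarrow>\<^sub>0 nat) \<Rightarrow>\<^sub>0 'k::field) \<Rightarrow> ('v \<Rightarrow> int) \<Rightarrow> 'k" where
  "degree_coeff_sum a p w =
     (\<Sum>m\<in>Poly_Mapping.keys p. if weight a m = w then Poly_Mapping.lookup p m else 0)"

lemma degree_coeff_sum_superset:
  assumes "finite F" "Poly_Mapping.keys p \<subseteq> F"
  shows "degree_coeff_sum a p w = (\<Sum>m\<in>F. if weight a m = w then Poly_Mapping.lookup p m else 0)"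
  unfolding degree_coeff_sum_def
  by (rule sum.mono_neutral_left) (auto simp: assms in_keys_iff)

lemma degree_coeff_sum_add:
  "degree_coeff_sum a (p + q) w = degree_coeff_sum a p w + degree_coeff_sum a q w"
proof -
  let ?F = "Poly_Mapping.keys p \<union> Poly_Mapping.keys q"
  have fin: "finite ?F" by simp
  have "degree_coeff_sum a (p + q) w
      = (\<Sum>m\<in>?F. if weight a m = w then Poly_Mapping.lookup (p + q) m else 0)"
    by (rule degree_coeff_sum_superset[OF fin]) (meson Poly_Mapping.keys_add)
  also have "\<dots> = (\<Sum>m\<in>?F. if weight a m = w then Poly_Mapping.lookup p m else 0)
                 + (\<Sum>m\<in>?F. if weight a m = w then Poly_Mapping.lookup q m else 0)"
    by (simp add: lookup_add sum.distrib[symmetric] if_distrib cong: if_cong)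
  also have "\<dots> = degree_coeff_sum a p w + degree_coeff_sum a q w"
    by (simp add: degree_coeff_sum_superset[OF fin])
  finally show ?thesis .
qed

lemma degree_coeff_sum_diff:
  "degree_coeff_sum a (p - q) w = degree_coeff_sum a p w - degree_coeff_sum a q w"
  using degree_coeff_sum_add[of a "p - q" q w] by simp

lemma degree_coeff_sum_zero [simp]: "degree_coeff_sum a 0 w = 0"
  by (simp add: degree_coeff_sum_def)

lemma degree_coeff_sum_sum:
  "degree_coeff_sum a (\<Sum>i\<in>I. f i) w = (\<Sum>i\<in>I. degree_coeff_sum a (f i) w)"
  by (induction I rule: infinite_finite_induct) (auto simp: degree_coeff_sum_add)

lemma degree_coeff_sum_single:
  "degree_coeff_sum a (Poly_Mapping.single m c) w = (if weight a m = w then c else 0)"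
  by (cases "c = 0") (auto simp: degree_coeff_sum_def)

lemma poly_mapping_sum_terms:
  "p = (\<Sum>m\<in>Poly_Mapping.keys p. Poly_Mapping.single m (Poly_Mapping.lookup p m))"
proof (rule poly_mapping_eqI)
  fix k
  have "Poly_Mapping.lookup (\<Sum>m\<in>Poly_Mapping.keys p. Poly_Mapping.single m (Poly_Mapping.lookup p m)) k
      = (\<Sum>m\<in>Poly_Mapping.keys p. Poly_Mapping.lookup (Poly_Mapping.single m (Poly_Mapping.lookup p m)) k)"
    by (simp add: lookup_sum)
  also have "\<dots> = Poly_Mapping.lookup p k"
    by (auto simp: lookup_single when_def in_keys_iff)
  finally show "Poly_Mapping.lookup p k
      = Poly_Mapping.lookup (\<Sum>m\<in>Poly_Mapping.keys p. Poly_Mapping.single m (Poly_Mapping.lookup p m)) k"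
    by simp
qed

text \<open>Multiplication by a monomial of degree \<open>d\<close> shifts all degrees by \<open>d\<close>; hence the
  polynomials all of whose degree coefficient sums vanish form an ideal.\<close>
lemma degree_coeff_sum_mult:
  assumes "\<And>w. degree_coeff_sum a p w = 0"
  shows "degree_coeff_sum a (r * p) w = 0"
proof -
  have "r * p = (\<Sum>l\<in>Poly_Mapping.keys r. \<Sum>m\<in>Poly_Mapping.keys p.
        Poly_Mapping.single (l + m) (Poly_Mapping.lookup r l * Poly_Mapping.lookup p m))"
    by (subst (1 2) poly_mapping_sum_terms)
       (simp add: sum_distrib_left sum_distrib_right mult_single sum.swap[of _ "Poly_Mapping.keys p"])
  then have "degree_coeff_sum a (r * p) w = (\<Sum>l\<in>Poly_Mapping.keys r. \<Sum>m\<in>Poly_Mapping.keys p.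
        if weight a (l + m) = w then Poly_Mapping.lookup r l * Poly_Mapping.lookup p m else 0)"
    by (simp add: degree_coeff_sum_sum degree_coeff_sum_single)
  also have "\<dots> = (\<Sum>l\<in>Poly_Mapping.keys r.
        Poly_Mapping.lookup r l * degree_coeff_sum a p (\<lambda>i. w i - weight a l i))"
  proof (rule sum.cong[OF refl])
    fix l
    have shift: "(weight a (l + m) = w) = (weight a m = (\<lambda>i. w i - weight a l i))" for m
      by (auto simp: weight_add fun_eq_iff algebra_simps)
    show "(\<Sum>m\<in>Poly_Mapping.keys p.
          if weight a (l + m) = w then Poly_Mapping.lookup r l * Poly_Mapping.lookup p m else 0)
        = Poly_Mapping.lookup r l * degree_coeff_sum a p (\<lambda>i. w i - weight a l i)"
      by (simp add: shift degree_coeff_sum_def sum_distrib_left if_distrib cong: if_cong)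
  qed
  also have "\<dots> = 0" using assms by simp
  finally show ?thesis .
qed

lemma toric_ideal_degree_coeff_sum:
  "p \<in> toric_ideal a \<Longrightarrow> degree_coeff_sum a p w = 0"
proof (induction p arbitrary: w rule: toric_ideal.induct)
  case (gen u v)
  then show ?case
    by (simp add: binom_x_def monom_x_def degree_coeff_sum_diff degree_coeff_sum_single)
next
  case (add p q)
  then show ?case by (simp add: degree_coeff_sum_add)
next
  case (mult p r)
  then show ?case by (simp add: degree_coeff_sum_mult)
qed simp

lemma toric_binomial_weight:
  assumes "binom_x u v \<in> (toric_ideal a :: (('e \<Rightarrow>\<^sub>0 nat) \<Rightarrow>\<^sub>0 'k::field) set)" "u \<noteq> v"
  shows "weight a u = weight a v"
proof (rule ccontr)
  assume ne: "weight a u \<noteq> weight a v"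
  have "degree_coeff_sum a (binom_x u v :: ('e \<Rightarrow>\<^sub>0 nat) \<Rightarrow>\<^sub>0 'k) (weight a u) = 1"
    using ne by (simp add: binom_x_def monom_x_def degree_coeff_sum_diff degree_coeff_sum_single)
  with toric_ideal_degree_coeff_sum[OF assms(1)] show False by simp
qed

section \<open>Binomials and circuits\<close>

lemma keys_binom:
  assumes "u \<noteq> v"
  shows "Poly_Mapping.keys (binom_x u v :: ('e \<Rightarrow>\<^sub>0 nat) \<Rightarrow>\<^sub>0 'k::field) = {u, v}"
  using assms
  by (auto simp: binom_x_def monom_x_def in_keys_iff lookup_minus lookup_single when_def
           split: if_splits)

lemma vars_binom:
  assumes "u \<noteq> v"
  shows "vars (binom_x u v :: ('e \<Rightarrow>\<^sub>0 nat) \<Rightarrow>\<^sub>0 'k::field) = Poly_Mapping.keys u \<union> Poly_Mapping.keys v"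
  by (simp add: vars_def keys_binom[OF assms])

lemma binom_nonzero:
  assumes "u \<noteq> v"
  shows "(binom_x u v :: ('e \<Rightarrow>\<^sub>0 nat) \<Rightarrow>\<^sub>0 'k::field) \<noteq> 0"
  using keys_binom[OF assms, where 'k='k] by force

lemma circuit_binomial:
  assumes "(C :: ('e \<Rightarrow>\<^sub>0 nat) \<Rightarrow>\<^sub>0 'k::field) \<in> circuits a"
  obtains u v where "C = binom_x u v" "u \<noteq> v" "weight a u = weight a v"
proof -
  obtain u v where C: "C = binom_x u v"
    using assms unfolding circuits_def is_binomial_def by blast
  have "C \<noteq> 0" using assms unfolding circuits_def by auto
  then have uv: "u \<noteq> v" by (auto simp: C binom_x_def)
  have "C \<in> toric_ideal a" using assms unfolding circuits_def by auto
  with C uv show ?thesis using that toric_binomial_weight by blast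
qed

lemma circuit_support_minimal:
  assumes C: "(C :: ('e \<Rightarrow>\<^sub>0 nat) \<Rightarrow>\<^sub>0 'k::field) \<in> circuits a"
    and ne: "u' \<noteq> v'" and wt: "weight a u' = weight a v'"
    and sub: "vars (binom_x u' v' :: ('e \<Rightarrow>\<^sub>0 nat) \<Rightarrow>\<^sub>0 'k) \<subseteq> vars C \<inter> T"
  shows "vars C \<subseteq> T"
proof -
  let ?B = "binom_x u' v' :: ('e \<Rightarrow>\<^sub>0 nat) \<Rightarrow>\<^sub>0 'k"
  have "is_binomial ?B" by (auto simp: is_binomial_def)
  moreover have "?B \<noteq> 0" by (rule binom_nonzero[OF ne])
  moreover have "?B \<in> toric_ideal a" by (rule toric_ideal.gen[OF wt])
  ultimately have "vars ?B = vars C" using C sub unfolding circuits_def by blast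
  with sub show ?thesis by blast
qed

section \<open>Integer spans\<close>

lemma int_span_zero: "(\<lambda>i. 0) \<in> int_span S"
  unfolding int_span_def by (auto intro!: exI[of _ "\<lambda>_. 0"])

lemma int_span_mem:
  assumes "finite S" "s \<in> S"
  shows "s \<in> int_span S"
  unfolding int_span_def
proof (intro CollectI exI[of _ "\<lambda>t. if t = s then 1 else 0"] ext)
  fix i
  have "(\<Sum>t\<in>S. (if t = s then 1 else 0) * t i) = (\<Sum>t\<in>S. if s = t then s i else 0)"
    by (rule sum.cong) auto
  also have "\<dots> = s i" using assms by (simp add: sum.delta)
  finally show "s i = (\<Sum>t\<in>S. (if t = s then 1 else 0) * t i)" by simp
qed

lemma int_span_add:
  assumes "y \<in> int_span S" "z \<in> int_span S"
  shows "(\<lambda>i. y i + z i) \<in> int_span S"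
proof -
  obtain c1 where c1: "y = (\<lambda>i. \<Sum>s\<in>S. c1 s * s i)" using assms(1) unfolding int_span_def by blast
  obtain c2 where c2: "z = (\<lambda>i. \<Sum>s\<in>S. c2 s * s i)" using assms(2) unfolding int_span_def by blast
  show ?thesis unfolding int_span_def
    by (intro CollectI exI[of _ "\<lambda>s. c1 s + c2 s"]) (simp add: c1 c2 sum.distrib algebra_simps)
qed

lemma int_span_scale:
  assumes "y \<in> int_span S"
  shows "(\<lambda>i. k * y i) \<in> int_span S"
proof -
  obtain c where c: "y = (\<lambda>i. \<Sum>s\<in>S. c s * s i)" using assms unfolding int_span_def by blast
  show ?thesis unfolding int_span_def
    by (intro CollectI exI[of _ "\<lambda>s. k * c s"]) (simp add: c sum_distrib_left algebra_simps)
qed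

lemma int_span_diff:
  assumes "y \<in> int_span S" "z \<in> int_span S"
  shows "(\<lambda>i. y i - z i) \<in> int_span S"
  using int_span_add[OF assms(1) int_span_scale[OF assms(2), of "-1"]] by simp

lemma int_span_sum:
  assumes "finite I" "\<And>j. j \<in> I \<Longrightarrow> f j \<in> int_span S"
  shows "(\<lambda>i. \<Sum>j\<in>I. f j i) \<in> int_span S"
  using assms
proof (induction I rule: finite_induct)
  case empty
  then show ?case by (simp add: int_span_zero)
next
  case (insert x F)
  then show ?case using int_span_add[of "f x" S "\<lambda>i. \<Sum>j\<in>F. f j i"] by simp
qed

lemma int_span_real_span:
  assumes "x \<in> int_span S"
  shows "x \<in> real_span_int S"
proof -
  obtain c where "x = (\<lambda>i. \<Sum>s\<in>S. c s * s i)" using assms unfolding int_span_def by blast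
  then have "\<forall>i. real_of_int (x i) = (\<Sum>s\<in>S. real_of_int (c s) * real_of_int (s i))" by simp
  then show ?thesis unfolding real_span_int_def by (intro CollectI exI[of _ "\<lambda>s. real_of_int (c s)"])
qed

lemma real_span_int_support:
  assumes "x \<in> real_span_int S" "\<And>s. s \<in> S \<Longrightarrow> s i = 0"
  shows "x i = 0"
proof -
  obtain c where "\<forall>i. real_of_int (x i) = (\<Sum>s\<in>S. c s * real_of_int (s i))"
    using assms(1) unfolding real_span_int_def by blast
  then have "real_of_int (x i) = (\<Sum>s\<in>S. c s * real_of_int (s i))" by blast
  also have "\<dots> = 0" using assms(2) by (intro sum.neutral) simp
  finally show ?thesis by simp
qed

text \<open>If a set \<open>L\<close> with \<open>0 \<in> L\<close> is contained in the lattice \<open>int_span S\<close>, every coset of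
  \<open>int_span S\<close> met by \<open>L\<close> is \<open>int_span S\<close> itself, so the index is 1.\<close>
lemma lattice_index_one:
  assumes sub: "L \<subseteq> int_span S" and zero: "(\<lambda>i. 0) \<in> L"
  shows "lattice_index L (int_span S) = 1"
proof -
  have coset: "(\<lambda>y. (\<lambda>i. x i + y i)) ` int_span S = int_span S" if x: "x \<in> int_span S" for x
  proof
    show "(\<lambda>y. (\<lambda>i. x i + y i)) ` int_span S \<subseteq> int_span S"
      using int_span_add[OF x] by blast
    show "int_span S \<subseteq> (\<lambda>y. (\<lambda>i. x i + y i)) ` int_span S"
    proof
      fix z assume "z \<in> int_span S"
      then have "(\<lambda>i. z i - x i) \<in> int_span S" by (rule int_span_diff[OF _ x])
      then show "z \<in> (\<lambda>y. (\<lambda>i. x i + y i)) ` int_span S"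
        by (intro image_eqI[where x = "\<lambda>i. z i - x i"]) auto
    qed
  qed
  have "(\<lambda>x. (\<lambda>y. (\<lambda>i. x i + y i)) ` int_span S) ` L = {int_span S}"
    using coset sub zero by blast
  then show ?thesis unfolding lattice_index_def by simp
qed

section \<open>Walks with parity\<close>

text \<open>\<open>walk ends E x y b\<close>: there is a walk from \<open>x\<close> to \<open>y\<close> using edges of \<open>E\<close> whose
  length is odd iff \<open>b\<close>.\<close>
inductive walk :: "('e \<Rightarrow> 'v set) \<Rightarrow> 'e set \<Rightarrow> 'v \<Rightarrow> 'v \<Rightarrow> bool \<Rightarrow> bool" for ends E where
  walk_refl: "walk ends E x x False"
| walk_step: "walk ends E x p b \<Longrightarrow> e \<in> E \<Longrightarrow> ends e = {p, q} \<Longrightarrow> walk ends E x q (\<not> b)"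

lemma walk_append:
  "walk ends E y z b2 \<Longrightarrow> walk ends E x y b1 \<Longrightarrow> walk ends E x z (b1 \<noteq> b2)"
proof (induction rule: walk.induct)
  case (walk_step y' p b e q)
  then have "walk ends E x p (b1 \<noteq> b)" by blast
  from walk.walk_step[OF this walk_step.hyps(2,3)] show ?case by (metis (full_types))
qed simp

lemma walk_rev: "walk ends E x y b \<Longrightarrow> walk ends E y x b"
proof (induction rule: walk.induct)
  case (walk_refl x)
  then show ?case by (rule walk.walk_refl)
next
  case (walk_step x p b e q)
  have "walk ends E q p True"
    using walk.walk_step[OF walk.walk_refl[of ends E q] walk_step.hyps(2)] walk_step.hyps(3)
    by (auto simp: insert_commute)
  from walk_append[OF walk_step.IH this] show ?case by simp
qed

lemma walk_parity_unique:
  assumes "\<not> walk ends E r r True" "walk ends E r w b1" "walk ends E r w b2"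
  shows "b1 = b2"
proof (rule ccontr)
  assume "b1 \<noteq> b2"
  with walk_append[OF walk_rev[OF assms(3)] assms(2)] assms(1) show False by simp
qed

definition reachable :: "('e \<Rightarrow> 'v set) \<Rightarrow> 'e set \<Rightarrow> 'v \<Rightarrow> 'v set" where
  "reachable ends E r = {w. \<exists>b. walk ends E r w b}"

lemma reachable_closed:
  assumes c2: "\<forall>e. card (ends e) = 2" and e: "e \<in> E"
  shows "ends e \<subseteq> reachable ends E r \<or> ends e \<inter> reachable ends E r = {}"
proof -
  obtain p q where pq: "ends e = {p, q}" using c2 by (meson card_2_iff)
  have "q \<in> reachable ends E r" if "p \<in> reachable ends E r" "ends e = {p, q}" for p q
    using that walk.walk_step[of ends E r p _ e q] e unfolding reachable_def by blast
  then show ?thesis using pq by (auto simp: insert_commute)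
qed

section \<open>The support of a circuit is connected\<close>

definition restrict_exp :: "'e set \<Rightarrow> ('e \<Rightarrow>\<^sub>0 nat) \<Rightarrow> ('e \<Rightarrow>\<^sub>0 nat)" where
  "restrict_exp T u = Abs_poly_mapping (\<lambda>e. if e \<in> T then Poly_Mapping.lookup u e else 0)"

lemma lookup_restrict_exp:
  "Poly_Mapping.lookup (restrict_exp T u) e = (if e \<in> T then Poly_Mapping.lookup u e else 0)"
proof -
  have "finite {e. (if e \<in> T then Poly_Mapping.lookup u e else 0) \<noteq> 0}"
    by (rule finite_subset[OF _ finite_lookup[of u]]) auto
  then show ?thesis unfolding restrict_exp_def by simp
qed

lemma keys_restrict_exp: "Poly_Mapping.keys (restrict_exp T u) = Poly_Mapping.keys u \<inter> T"
  by (auto simp: in_keys_iff lookup_restrict_exp split: if_splits)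

lemma circuit_restriction_trivial:
  assumes C: "(C :: ('e \<Rightarrow>\<^sub>0 nat) \<Rightarrow>\<^sub>0 'k::field) \<in> circuits a" "C = binom_x u v" "u \<noteq> v"
    and wt: "weight a (restrict_exp T u) = weight a (restrict_exp T v)"
    and outside: "e \<in> vars C" "e \<notin> T"
  shows "restrict_exp T u = restrict_exp T v"
proof (rule ccontr)
  assume ne: "restrict_exp T u \<noteq> restrict_exp T v"
  have "vars (binom_x (restrict_exp T u) (restrict_exp T v) :: ('e \<Rightarrow>\<^sub>0 nat) \<Rightarrow>\<^sub>0 'k) \<subseteq> vars C \<inter> T"
    using C by (simp add: vars_binom[OF ne] vars_binom keys_restrict_exp) blast
  from circuit_support_minimal[OF C(1) ne wt this] outside show False by blast
qed

lemma weight_restrict_component: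
  assumes sep: "\<forall>e\<in>Poly_Mapping.keys u. ends e \<subseteq> R \<or> ends e \<inter> R = {}"
  shows "weight (edge_vec ends) (restrict_exp {e. ends e \<subseteq> R} u) i
       = (if i \<in> R then weight (edge_vec ends) u i else 0)"
proof -
  have "weight (edge_vec ends) (restrict_exp {e. ends e \<subseteq> R} u) i
      = (\<Sum>e\<in>Poly_Mapping.keys u.
           int (Poly_Mapping.lookup (restrict_exp {e. ends e \<subseteq> R} u) e) * edge_vec ends e i)"
    by (rule weight_superset) (auto simp: keys_restrict_exp)
  also have "\<dots> = (\<Sum>e\<in>Poly_Mapping.keys u.
      if i \<in> R then int (Poly_Mapping.lookup u e) * edge_vec ends e i else 0)"
    using sep by (intro sum.cong refl) (auto simp: lookup_restrict_exp edge_vec_def)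
  also have "\<dots> = (if i \<in> R then weight (edge_vec ends) u i else 0)"
    by (simp add: weight_def)
  finally show ?thesis .
qed

text \<open>Otherwise splitting
  \<open>u\<close> and \<open>v\<close> along the component of \<open>r\<close> and its complement yields two homogeneous
  restrictions, which must both be trivial, forcing \<open>u = v\<close>.\<close>
lemma circuit_support_connected:
  fixes C :: "('e \<Rightarrow>\<^sub>0 nat) \<Rightarrow>\<^sub>0 'k::field"
  assumes c2: "\<forall>e. card (ends e) = 2"
    and C: "C \<in> circuits (edge_vec ends)"
    and r: "r \<in> \<Union>(ends ` vars C)"
  shows "\<Union>(ends ` vars C) \<subseteq> reachable ends (vars C) r"
proof (rule ccontr)
  assume "\<not> ?thesis"
  then obtain e2 where e2: "e2 \<in> vars C" "\<not> ends e2 \<subseteq> reachable ends (vars C) r" by blast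
  obtain e0 where e0: "e0 \<in> vars C" "r \<in> ends e0" using r by blast
  obtain u v where uv: "C = binom_x u v" "u \<noteq> v" "weight (edge_vec ends) u = weight (edge_vec ends) v"
    using circuit_binomial[OF C] by blast
  have V: "vars C = Poly_Mapping.keys u \<union> Poly_Mapping.keys v"
    using uv by (simp add: vars_binom)
  define R where "R = reachable ends (vars C) r"
  have "r \<in> R" unfolding R_def reachable_def by (blast intro: walk.walk_refl)
  have sep: "ends e \<subseteq> X \<or> ends e \<inter> X = {}" if "e \<in> vars C" "X = R \<or> X = - R" for e X
    using reachable_closed[OF c2 \<open>e \<in> vars C\<close>, of r] that unfolding R_def by blast
  text \<open>The restrictions to the edges inside \<open>R\<close>, resp. outside \<open>R\<close>, are homogeneous
    and miss part of the support, hence are trivial.\<close>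
  have trivial: "restrict_exp {e. ends e \<subseteq> X} u = restrict_exp {e. ends e \<subseteq> X} v"
    if X: "X = R \<or> X = - R" and out: "e \<in> vars C" "\<not> ends e \<subseteq> X" for X e
  proof (rule circuit_restriction_trivial[OF C uv(1,2) _ out(1)])
    show "weight (edge_vec ends) (restrict_exp {e. ends e \<subseteq> X} u)
        = weight (edge_vec ends) (restrict_exp {e. ends e \<subseteq> X} v)"
      using weight_restrict_component[of u ends X] weight_restrict_component[of v ends X]
        sep[OF _ X] uv(3) V by auto
  qed (use out in simp)
  have inside: "restrict_exp {e. ends e \<subseteq> R} u = restrict_exp {e. ends e \<subseteq> R} v"
    using trivial[of R e2] e2 R_def by simp
  have outside: "restrict_exp {e. ends e \<subseteq> - R} u = restrict_exp {e. ends e \<subseteq> - R} v"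
    using trivial[of "- R" e0] e0 \<open>r \<in> R\<close> by auto
  have "Poly_Mapping.lookup u e = Poly_Mapping.lookup v e" for e
  proof (cases "e \<in> vars C")
    case True
    then have "ends e \<subseteq> R \<or> ends e \<subseteq> - R" using sep[of e R] by blast
    then show ?thesis
      using inside[THEN arg_cong[where f = "\<lambda>p. Poly_Mapping.lookup p e"]]
        outside[THEN arg_cong[where f = "\<lambda>p. Poly_Mapping.lookup p e"]]
      by (auto simp: lookup_restrict_exp)
  next
    case False
    then show ?thesis using V by (simp add: in_keys_iff)
  qed
  then have "u = v" by (rule poly_mapping_eqI)
  with uv(2) show False ..
qed

section \<open>Saturation of the lattice of a connected edge set\<close>

definition unit_vec :: "'v \<Rightarrow> 'v \<Rightarrow> int" where
  "unit_vec w = (\<lambda>i. if i = w then 1 else 0)"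

lemma edge_vec_unit_vecs:
  assumes "ends e = {p, q}" "p \<noteq> q"
  shows "edge_vec ends e = (\<lambda>i. unit_vec p i + unit_vec q i)"
  using assms by (auto simp: edge_vec_def unit_vec_def fun_eq_iff)

lemma finite_edge_vertices:
  assumes "finite E" "\<forall>e. card (ends e) = 2"
  shows "finite (\<Union>(ends ` E))"
  using assms by (auto intro: card_ge_0_finite)

text \<open>Along a walk from \<open>r\<close> to \<open>w\<close> the alternating sum of the edge vectors telescopes:
  \<open>e_w - e_r\<close> (even length) or \<open>e_w + e_r\<close> (odd length) is an integer combination of
  the edge vectors of the walk.\<close>
lemma walk_int_span:
  assumes fin: "finite E" and c2: "\<forall>e. card (ends e) = 2"
  shows "walk ends E r w b \<Longrightarrow>
    (\<lambda>i. unit_vec w i - (if b then -1 else 1) * unit_vec r i) \<in> int_span (edge_vec ends ` E)"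
proof (induction rule: walk.induct)
  case walk_refl
  then show ?case using int_span_zero by simp
next
  case (walk_step x p b e q)
  have pq: "p \<noteq> q" using c2[rule_format, of e] walk_step.hyps(3) by auto
  have "edge_vec ends e \<in> int_span (edge_vec ends ` E)"
    using int_span_mem[of "edge_vec ends ` E"] fin walk_step.hyps(2) by blast
  from int_span_diff[OF this walk_step.IH] show ?case
    by (cases b) (simp_all add: edge_vec_unit_vecs[of ends e p q, OF walk_step.hyps(3) pq] algebra_simps)
qed

lemma reduce_to_root:
  assumes fin: "finite E" and c2: "\<forall>e. card (ends e) = 2"
    and conn: "\<Union>(ends ` E) \<subseteq> reachable ends E r"
    and supp: "\<And>i. i \<notin> \<Union>(ends ` E) \<Longrightarrow> x i = 0"
  obtains k where "(\<lambda>i. x i - k * unit_vec r i) \<in> int_span (edge_vec ends ` E)"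
proof -
  let ?W = "\<Union>(ends ` E)" and ?S = "edge_vec ends ` E"
  have finW: "finite ?W"
    by (rule finite_edge_vertices[OF fin c2])
  have "\<forall>w\<in>?W. \<exists>s. (\<lambda>i. unit_vec w i - s * unit_vec r i) \<in> int_span ?S"
    using walk_int_span[OF fin c2] conn unfolding reachable_def by blast
  then obtain s where s: "\<And>w. w \<in> ?W \<Longrightarrow> (\<lambda>i. unit_vec w i - s w * unit_vec r i) \<in> int_span ?S"
    by metis
  have "(\<lambda>i. \<Sum>w\<in>?W. x w * (unit_vec w i - s w * unit_vec r i)) \<in> int_span ?S"
  proof (rule int_span_sum[OF finW])
    fix w assume "w \<in> ?W"
    from int_span_scale[OF s[OF this], of "x w"]
    show "(\<lambda>i. x w * (unit_vec w i - s w * unit_vec r i)) \<in> int_span ?S" .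
  qed
  moreover have "(\<Sum>w\<in>?W. x w * (unit_vec w i - s w * unit_vec r i))
      = x i - (\<Sum>w\<in>?W. x w * s w) * unit_vec r i" for i
  proof -
    have "(\<Sum>w\<in>?W. x w * unit_vec w i) = (\<Sum>w\<in>?W. if i = w then x i else 0)"
      by (rule sum.cong) (auto simp: unit_vec_def)
    also have "\<dots> = x i" using finW supp by (simp add: sum.delta)
    finally show ?thesis
      by (simp add: right_diff_distrib sum_subtractf sum_distrib_right mult.assoc)
  qed
  ultimately show ?thesis using that by simp
qed

text \<open>Every edge vector has coordinate sum 2, so all integer combinations of edge
  vectors (in particular all vectors of \<open>Z A_G\<close>) have even coordinate sum.\<close>
lemma int_span_edge_vecs_even:
  assumes finV: "finite (UNIV :: 'v set)" and c2: "\<forall>e. card (ends e) = 2"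
    and S: "S \<subseteq> range (edge_vec ends)" and y: "y \<in> int_span S"
  shows "even (\<Sum>i\<in>(UNIV :: 'v set). y i)"
proof -
  obtain c where c: "y = (\<lambda>i. \<Sum>s\<in>S. c s * s i)"
    using y unfolding int_span_def by blast
  have edge_sum: "(\<Sum>i\<in>UNIV. edge_vec ends e i) = 2" for e
    using finV c2 by (simp add: edge_vec_def sum.If_cases)
  have "(\<Sum>i\<in>UNIV. y i) = (\<Sum>s\<in>S. c s * (\<Sum>i\<in>UNIV. s i))"
    by (simp add: c sum_distrib_left) (rule sum.swap)
  also have "\<dots> = (\<Sum>s\<in>S. 2 * c s)"
    using S by (intro sum.cong) (auto simp: edge_sum)
  also have "\<dots> = 2 * (\<Sum>s\<in>S. c s)"
    by (simp add: sum_distrib_left)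
  finally show ?thesis by simp
qed

text \<open>Non-bipartite case: an odd closed walk at \<open>r\<close> puts \<open>2 e_r\<close> into the edge
  lattice, and parity of the coordinate sum shows that the multiple of \<open>e_r\<close> left
  over by \<open>reduce_to_root\<close> is even.\<close>
lemma saturated_odd_cycle:
  fixes ends :: "'e \<Rightarrow> 'v set" and x :: "'v \<Rightarrow> int"
  assumes finV: "finite (UNIV :: 'v set)" and fin: "finite E" and c2: "\<forall>e. card (ends e) = 2"
    and odd: "walk ends E r r True"
    and x: "x \<in> int_span (range (edge_vec ends))"
    and k: "(\<lambda>i. x i - k * unit_vec r i) \<in> int_span (edge_vec ends ` E)"
  shows "x \<in> int_span (edge_vec ends ` E)"
proof -
  have "even (\<Sum>i\<in>(UNIV :: 'v set). x i - k * unit_vec r i)"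
    using int_span_edge_vecs_even[OF finV c2 _ k] by blast
  moreover have "(\<Sum>i\<in>(UNIV :: 'v set). x i - k * unit_vec r i) = (\<Sum>i\<in>UNIV. x i) - k"
    using finV by (simp add: sum_subtractf sum_distrib_left[symmetric] unit_vec_def)
  moreover have "even (\<Sum>i\<in>(UNIV :: 'v set). x i)"
    using int_span_edge_vecs_even[OF finV c2 _ x] by simp
  ultimately have "even k" by simp
  then obtain j where j: "k = 2 * j" by blast
  have "(\<lambda>i. unit_vec r i + unit_vec r i) \<in> int_span (edge_vec ends ` E)"
    using walk_int_span[OF fin c2 odd] by simp
  from int_span_add[OF k int_span_scale[OF this, of j]] show ?thesis
    by (simp add: j algebra_simps)
qed

text \<open>Bipartite case: if there is no odd closed walk at \<open>r\<close>, signing each vertex by the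
  parity of its distance from \<open>r\<close> gives a linear functional that vanishes on every
  edge vector (its two endpoints get opposite signs), hence on the whole real span,
  and takes the value 1 at \<open>e_r\<close>.\<close>
lemma bipartite_signing:
  fixes ends :: "'e \<Rightarrow> 'v set"
  assumes fin: "finite E" and c2: "\<forall>e. card (ends e) = 2"
    and bip: "\<not> walk ends E r r True"
    and conn: "\<Union>(ends ` E) \<subseteq> reachable ends E r" and r: "r \<in> \<Union>(ends ` E)"
  obtains \<sigma> :: "'v \<Rightarrow> real" where "\<sigma> r = 1"
    "\<And>z. z \<in> real_span_int (edge_vec ends ` E) \<Longrightarrow>
       (\<Sum>w\<in>\<Union>(ends ` E). \<sigma> w * real_of_int (z w)) = 0"
proof -
  let ?W = "\<Union>(ends ` E)"
  have finW: "finite ?W" by (rule finite_edge_vertices[OF fin c2])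
  define parity where "parity w = (SOME b. walk ends E r w b)" for w
  have parity: "walk ends E r w (parity w)" if "w \<in> ?W" for w
    unfolding parity_def using conn that unfolding reachable_def by (blast intro: someI)
  have parity_eq: "parity w = b" if "w \<in> ?W" "walk ends E r w b" for w b
    using walk_parity_unique[OF bip] parity that by blast
  define \<sigma> :: "'v \<Rightarrow> real" where "\<sigma> w = (if parity w then -1 else 1)" for w
  have edge_zero: "(\<Sum>w\<in>?W. \<sigma> w * real_of_int (edge_vec ends e w)) = 0" if e: "e \<in> E" for e
  proof -
    obtain p q where pq: "ends e = {p, q}" "p \<noteq> q" using c2 by (meson card_2_iff)
    have W: "p \<in> ?W" "q \<in> ?W" using e pq by auto
    have "parity q = (\<not> parity p)"
      using parity_eq[OF W(2) walk.walk_step[OF parity[OF W(1)] e pq(1)]] .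
    then have opposite: "\<sigma> p + \<sigma> q = 0" by (simp add: \<sigma>_def)
    have "(\<Sum>w\<in>?W. \<sigma> w * real_of_int (edge_vec ends e w))
        = (\<Sum>w\<in>?W. if w \<in> {p, q} then \<sigma> w else 0)"
      by (intro sum.cong) (auto simp: edge_vec_def pq(1))
    also have "\<dots> = (\<Sum>w\<in>?W \<inter> {p, q}. \<sigma> w)"
      using finW by (rule sum.inter_restrict[symmetric])
    also have "?W \<inter> {p, q} = {p, q}" using W by auto
    finally show ?thesis using pq(2) opposite by simp
  qed
  show ?thesis
  proof (rule that)
    show "\<sigma> r = 1"
      using parity_eq[OF r walk.walk_refl] by (simp add: \<sigma>_def)
  next
    fix z assume "z \<in> real_span_int (edge_vec ends ` E)"
    then obtain c where c: "\<And>i. real_of_int (z i) = (\<Sum>s\<in>edge_vec ends ` E. c s * real_of_int (s i))"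
      unfolding real_span_int_def by blast
    have "(\<Sum>w\<in>?W. \<sigma> w * real_of_int (z w))
        = (\<Sum>s\<in>edge_vec ends ` E. c s * (\<Sum>w\<in>?W. \<sigma> w * real_of_int (s w)))"
      by (simp add: c sum_distrib_left algebra_simps) (rule sum.swap)
    also have "\<dots> = 0"
      using edge_zero by (intro sum.neutral) auto
    finally show "(\<Sum>w\<in>?W. \<sigma> w * real_of_int (z w)) = 0" .
  qed
qed

text \<open>In the bipartite case the leftover multiple \<open>k e_r\<close> lies in the real span,
  where the sign functional vanishes; as it is 1 at \<open>e_r\<close>, \<open>k = 0\<close>.\<close>
lemma saturated_bipartite:
  fixes ends :: "'e \<Rightarrow> 'v set" and x :: "'v \<Rightarrow> int"
  assumes fin: "finite E" and c2: "\<forall>e. card (ends e) = 2"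
    and bip: "\<not> walk ends E r r True"
    and conn: "\<Union>(ends ` E) \<subseteq> reachable ends E r" and r: "r \<in> \<Union>(ends ` E)"
    and x: "x \<in> real_span_int (edge_vec ends ` E)"
    and k: "(\<lambda>i. x i - k * unit_vec r i) \<in> int_span (edge_vec ends ` E)"
  shows "x \<in> int_span (edge_vec ends ` E)"
proof -
  let ?W = "\<Union>(ends ` E)"
  have finW: "finite ?W" by (rule finite_edge_vertices[OF fin c2])
  obtain \<sigma> :: "'v \<Rightarrow> real" where \<sigma>r: "\<sigma> r = 1"
    and vanish: "\<And>z. z \<in> real_span_int (edge_vec ends ` E) \<Longrightarrow>
                   (\<Sum>w\<in>?W. \<sigma> w * real_of_int (z w)) = 0"
    using bipartite_signing[OF fin c2 bip conn r] by blast
  have "0 = (\<Sum>w\<in>?W. \<sigma> w * real_of_int (x w - k * unit_vec r w))"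
    using vanish[OF int_span_real_span[OF k]] by simp
  also have "\<dots> = (\<Sum>w\<in>?W. \<sigma> w * real_of_int (x w)) - real_of_int k * (\<Sum>w\<in>?W. \<sigma> w * real_of_int (unit_vec r w))"
    by (simp add: algebra_simps sum_subtractf sum_distrib_left)
  also have "(\<Sum>w\<in>?W. \<sigma> w * real_of_int (unit_vec r w)) = 1"
    using finW r \<sigma>r by (simp add: unit_vec_def if_distrib sum.delta' cong: if_cong)
  finally have "k = 0" using vanish[OF x] by simp
  with k show ?thesis by simp
qed

lemma connected_edge_lattice_saturated:
  fixes ends :: "'e \<Rightarrow> 'v set" and x :: "'v \<Rightarrow> int"
  assumes finV: "finite (UNIV :: 'v set)" and fin: "finite E" and c2: "\<forall>e. card (ends e) = 2"
    and conn: "\<Union>(ends ` E) \<subseteq> reachable ends E r" and r: "r \<in> \<Union>(ends ` E)"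
    and x_real: "x \<in> real_span_int (edge_vec ends ` E)"
    and x_int: "x \<in> int_span (range (edge_vec ends))"
  shows "x \<in> int_span (edge_vec ends ` E)"
proof -
  have "x i = 0" if "i \<notin> \<Union>(ends ` E)" for i
    using that by (intro real_span_int_support[OF x_real]) (auto simp: edge_vec_def)
  then obtain k where k: "(\<lambda>i. x i - k * unit_vec r i) \<in> int_span (edge_vec ends ` E)"
    using reduce_to_root[OF fin c2 conn] by blast
  show ?thesis
  proof (cases "walk ends E r r True")
    case True
    then show ?thesis by (rule saturated_odd_cycle[OF finV fin c2 _ x_int k])
  next
    case False
    then show ?thesis by (rule saturated_bipartite[OF fin c2 _ conn r x_real k])
  qed
qed

theorem theorem3p1:
  fixes ends :: "'e \<Rightarrow> 'v set"
    and C :: "('e \<Rightarrow>\<^sub>0 nat) \<Rightarrow>\<^sub>0 'k::field"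
  assumes "simple_connected_graph ends"
    and "C \<in> circuits (edge_vec ends)"
  shows "circuit_index (edge_vec ends) C = 1 \<and>
         true_degree (edge_vec ends) C = total_degree C"
proof -
  have finV: "finite (UNIV :: 'v set)" and finE: "finite (UNIV :: 'e set)"
    and c2: "\<forall>e. card (ends e) = 2"
    using assms(1) unfolding simple_connected_graph_def by auto
  obtain u v where "C = binom_x u v" "u \<noteq> v"
    using circuit_binomial[OF assms(2)] by blast
  then have "vars C \<noteq> {}" by (auto simp: vars_binom)
  then obtain e0 where e0: "e0 \<in> vars C" by blast
  obtain r where r: "r \<in> ends e0" using c2 by (metis card.empty ex_in_conv zero_neq_numeral)
  let ?S = "supp_vecs (edge_vec ends) C"
  have conn: "\<Union>(ends ` vars C) \<subseteq> reachable ends (vars C) r"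
    using circuit_support_connected[OF c2 assms(2)] e0 r by blast
  have "real_span_int ?S \<inter> int_span (range (edge_vec ends)) \<subseteq> int_span ?S"
    using connected_edge_lattice_saturated[OF finV finite_subset[OF subset_UNIV finE] c2 conn] e0 r
    unfolding supp_vecs_def by blast
  moreover have "(\<lambda>i. 0) \<in> real_span_int ?S \<inter> int_span (range (edge_vec ends))"
    using int_span_zero int_span_real_span by blast
  ultimately have "circuit_index (edge_vec ends) C = 1"
    unfolding circuit_index_def by (rule lattice_index_one)
  then show ?thesis by (simp add: true_degree_def)
qed

end
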